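(* Let $A,B,\beta,\xi_0>0$ and let $\{w_n\}_{n\ge0}$ be functions $w_n\colon[\xi_0,\infty)\to[0,1]$ with $w_{n+1}(\xi)\le w_n(\xi)$ for all $n,\xi$. Suppose $w_0$ decays rapidly in $\xi$ and that $$w_{n+N}(\xi)\le(1-A\xi^{-\beta})w_n(\xi)\quad\text{for all } n\ge0,\ \xi\ge\xi_0 \text{ and all integers } N>B\log\xi.$$ Then the sequence $s_n=\sup_{\xi\ge\xi_0}w_n(\xi)$ decays rapidly in $n$.
   Context: A function $w\colon D\subseteq(0,\infty)\to\mathbb R$ decays rapidly in $\xi$ if for each $\ell\ge1$ there is $C$ with $|w(\xi)|\le C\xi^{-\ell}$ for all $\xi\in D$. A sequence $\{s_n\}$ decays rapidly in $n$ if for each $\ell\ge1$ there is $C$ with $|s_n|\le Cn^{-\ell}$ for all $n\ge1$. *)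

theory Defs
  imports "HOL-Analysis.Analysis"
begin

definition decays_rapidly_on :: "real set \<Rightarrow> (real \<Rightarrow> real) \<Rightarrow> bool" where
  "decays_rapidly_on D w \<longleftrightarrow>
     (\<forall>l::nat. l \<ge> 1 \<longrightarrow> (\<exists>C. \<forall>\<xi>\<in>D. \<bar>w \<xi>\<bar> \<le> C * \<xi> powr (- real l)))"

definition seq_decays_rapidly :: "(nat \<Rightarrow> real) \<Rightarrow> bool" where
  "seq_decays_rapidly s \<longleftrightarrow>
     (\<forall>l::nat. l \<ge> 1 \<longrightarrow> (\<exists>C. \<forall>n::nat. n \<ge> 1 \<longrightarrow> \<bar>s n\<bar> \<le> C * real n powr (- real l)))"

end

theory Submission
  imports Defs "HOL-Real_Asymp.Real_Asymp"
begin

(* Fix l and split the frequencies at xi = n^(1/(2 beta)).  Above the threshold,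
   w_n <= w_0 and the rapid decay of w_0 gives w_n(xi) = O(n^-l).  Below it, cut
   [0, n] into blocks of length N(xi) = floor(B ln xi) + 1 = O(log n); each block
   multiplies w by at most 1 - A xi^-beta <= exp(-A n^-(1/2)), so
   w_n(xi) <= exp(-A n^-(1/2) (n / O(log n) - 1)), which decays faster than any
   power of n. *)

lemma seq_decays_rapidlyI_eventually:
  fixes s :: "nat \<Rightarrow> real"
  assumes bounded: "\<And>n. \<bar>s n\<bar> \<le> K"
    and eventually_bound:
      "\<And>l. l \<ge> 1 \<Longrightarrow> \<exists>C. eventually (\<lambda>n. \<bar>s n\<bar> \<le> C * real n powr - real l) sequentially"
  shows "seq_decays_rapidly s"
  unfolding seq_decays_rapidly_def
proof (intro allI impI)
  fix l :: nat assume "l \<ge> 1"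
  then obtain C n0 where tail: "\<And>n. n \<ge> n0 \<Longrightarrow> \<bar>s n\<bar> \<le> C * real n powr - real l"
    using eventually_bound unfolding eventually_sequentially by blast
  have "K \<ge> 0" using bounded[of 0] by linarith
  define C' where "C' = max C (K * real n0 ^ l)"
  have "\<bar>s n\<bar> \<le> C' * real n powr - real l" if "n \<ge> 1" for n
  proof (cases "n \<ge> n0")
    case True
    then show ?thesis
      using tail[of n] mult_right_mono[of C C' "real n powr - real l"] by (simp add: C'_def)
  next
    case False
    have n_pos: "real n > 0" using \<open>n \<ge> 1\<close> by simp
    have "K = K * real n ^ l * real n powr - real l"
      using n_pos by (simp add: powr_minus powr_realpow)
    also have "\<dots> \<le> K * real n0 ^ l * real n powr - real l"
      using False \<open>K \<ge> 0\<close> by (intro mult_right_mono mult_left_mono power_mono) auto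
    also have "\<dots> \<le> C' * real n powr - real l"
      by (intro mult_right_mono) (auto simp: C'_def)
    finally show ?thesis using bounded[of n] by linarith
  qed
  then show "\<exists>C. \<forall>n\<ge>1. \<bar>s n\<bar> \<le> C * real n powr - real l" by blast
qed

lemma abs_Sup_image_le:
  fixes f :: "'a \<Rightarrow> real"
  assumes "S \<noteq> {}" and "\<And>x. x \<in> S \<Longrightarrow> 0 \<le> f x" and "\<And>x. x \<in> S \<Longrightarrow> f x \<le> b"
  shows "\<bar>Sup (f ` S)\<bar> \<le> b"
proof -
  obtain x where "x \<in> S" using assms(1) by blast
  have "bdd_above (f ` S)" using assms(3) by (intro bdd_aboveI2) auto
  then have "0 \<le> Sup (f ` S)"
    using \<open>x \<in> S\<close> assms(2) by (meson cSup_upper image_eqI order_trans)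
  moreover have "Sup (f ` S) \<le> b" using assms(1,3) by (auto intro: cSup_least)
  ultimately show ?thesis by simp
qed

lemma contraction_iterate_le_exp:
  fixes u :: "nat \<Rightarrow> real"
  assumes nonneg: "\<And>n. 0 \<le> u n" and "u 0 \<le> 1"
    and contraction: "\<And>n. u (n + N) \<le> (1 - a) * u n"
  shows "u (k * N) \<le> exp (- a * real k)"
proof (induction k)
  case 0
  then show ?case using \<open>u 0 \<le> 1\<close> by simp
next
  case (Suc k)
  have "u (Suc k * N) \<le> (1 - a) * u (k * N)"
    using contraction[of "k * N"] by (simp add: add.commute)
  also have "\<dots> \<le> exp (- a) * exp (- a * real k)"
  proof (cases "1 - a \<ge> 0")
    case True
    have "(1 - a) * u (k * N) \<le> (1 - a) * exp (- a * real k)"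
      using Suc.IH True by (rule mult_left_mono)
    also have "\<dots> \<le> exp (- a) * exp (- a * real k)"
      using exp_ge_add_one_self[of "- a"] by (intro mult_right_mono) auto
    finally show ?thesis .
  next
    case False
    then have "(1 - a) * u (k * N) \<le> 0" using nonneg by (simp add: mult_nonpos_nonneg)
    moreover have "0 \<le> exp (- a) * exp (- a * real k)" by simp
    ultimately show ?thesis by linarith
  qed
  also have "\<dots> = exp (- a * real (Suc k))" by (simp add: algebra_simps flip: exp_add)
  finally show ?case .
qed

lemma antitone_contraction_le_exp:
  fixes u :: "nat \<Rightarrow> real"
  assumes "\<And>n. 0 \<le> u n" and "u 0 \<le> 1" and antitone: "\<And>n. u (Suc n) \<le> u n"
    and "\<And>n. u (n + N) \<le> (1 - a) * u n"
  shows "u n \<le> exp (- a * real (n div N))"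
proof -
  have "u n \<le> u (n div N * N)"
    using antitone div_times_less_eq_dividend by (rule lift_Suc_antimono_le)
  also have "\<dots> \<le> exp (- a * real (n div N))"
    using assms(1,2,4) by (rule contraction_iterate_le_exp)
  finally show ?thesis .
qed

lemma real_div_ge_divide_minus_one: "real (n div N) \<ge> real n / real N - 1"
proof -
  have "real (n div N) = of_int \<lfloor>real n / real N\<rfloor>"
    by (metis floor_divide_of_nat_eq of_int_of_nat_eq)
  then show ?thesis by linarith
qed

lemma eventually_exp_sqrt_log_le_powr:
  fixes A c l :: real
  assumes "A > 0" and "c > 0"
  shows "eventually (\<lambda>n. exp (- A * real n powr (-1/2) * (real n / (c * ln (real n) + 1) - 1))
           \<le> real n powr - l) sequentially"
  using assms by real_asymp

locale contracting_family =
  fixes A B \<beta> \<xi>0 :: real and w :: "nat \<Rightarrow> real \<Rightarrow> real"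
  assumes A_pos: "A > 0" and B_pos: "B > 0" and \<beta>_pos: "\<beta> > 0" and \<xi>0_pos: "\<xi>0 > 0"
    and w_range: "\<And>n \<xi>. \<xi> \<ge> \<xi>0 \<Longrightarrow> 0 \<le> w n \<xi> \<and> w n \<xi> \<le> 1"
    and w_antitone: "\<And>n \<xi>. \<xi> \<ge> \<xi>0 \<Longrightarrow> w (Suc n) \<xi> \<le> w n \<xi>"
    and w0_decay: "decays_rapidly_on {\<xi>0..} (w 0)"
    and w_contraction: "\<And>n \<xi> (N::nat). \<xi> \<ge> \<xi>0 \<Longrightarrow> real N > B * ln \<xi> \<Longrightarrow>
                          w (n + N) \<xi> \<le> (1 - A * \<xi> powr (- \<beta>)) * w n \<xi>"
begin

lemma w_le_w0: "\<xi> \<ge> \<xi>0 \<Longrightarrow> w n \<xi> \<le> w 0 \<xi>"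
  using lift_Suc_antimono_le[of "\<lambda>n. w n \<xi>" 0 n] w_antitone by blast

lemma w_le_exp_below_threshold:
  assumes "n \<ge> 1" and "\<xi> \<ge> \<xi>0" and "\<xi> < real n powr (1 / (2 * \<beta>))"
  shows "w n \<xi> \<le> exp (- A * real n powr (-1/2) * (real n / (B / (2 * \<beta>) * ln (real n) + 1) - 1))"
proof -
  define N :: nat where "N = nat \<lfloor>B * ln \<xi>\<rfloor> + 1"
  define M where "M = B / (2 * \<beta>) * ln (real n) + 1"
  define a where "a = A * \<xi> powr - \<beta>"
  have n_pos: "real n > 0" and \<xi>_pos: "\<xi> > 0" using assms \<xi>0_pos by auto
  have N_gt: "real N > B * ln \<xi>" unfolding N_def by linarith
  have "ln \<xi> < ln (real n powr (1 / (2 * \<beta>)))"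
    using assms(3) \<xi>_pos n_pos by (subst ln_less_cancel_iff) auto
  also have "\<dots> = ln (real n) / (2 * \<beta>)" using n_pos by (simp add: ln_powr)
  finally have "B * ln \<xi> \<le> B * (ln (real n) / (2 * \<beta>))"
    using B_pos by (intro mult_left_mono) auto
  then have "B * ln \<xi> \<le> B / (2 * \<beta>) * ln (real n)" by simp
  moreover have "0 \<le> B / (2 * \<beta>) * ln (real n)" using assms(1) B_pos \<beta>_pos by simp
  ultimately have N_le: "real N \<le> M" unfolding N_def M_def by linarith
  have "\<xi> powr \<beta> \<le> (real n powr (1 / (2 * \<beta>))) powr \<beta>"
    using assms(3) \<xi>_pos \<beta>_pos by (intro powr_mono2) auto
  also have "\<dots> = real n powr (1/2)" using \<beta>_pos by (simp add: powr_powr)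
  finally have "real n powr (-1/2) \<le> \<xi> powr - \<beta>"
    using \<xi>_pos n_pos by (simp add: powr_minus le_imp_inverse_le)
  then have a_ge: "A * real n powr (-1/2) \<le> a" unfolding a_def using A_pos by simp
  have "real n / M - 1 \<le> real n / real N - 1"
    using N_le N_gt unfolding N_def by (intro diff_right_mono divide_left_mono) auto
  also have "\<dots> \<le> real (n div N)" by (rule real_div_ge_divide_minus_one)
  finally have "A * real n powr (-1/2) * (real n / M - 1) \<le> A * real n powr (-1/2) * real (n div N)"
    using A_pos by (intro mult_left_mono) auto
  also have "\<dots> \<le> a * real (n div N)" using a_ge by (intro mult_right_mono) auto
  finally have exponent_le: "A * real n powr (-1/2) * (real n / M - 1) \<le> a * real (n div N)" .
  have "w n \<xi> \<le> exp (- a * real (n div N))"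
    using w_range w_antitone w_contraction \<open>\<xi> \<ge> \<xi>0\<close> N_gt unfolding a_def
    by (intro antitone_contraction_le_exp) auto
  also have "\<dots> \<le> exp (- A * real n powr (-1/2) * (real n / M - 1))"
    using exponent_le by simp
  finally show ?thesis unfolding M_def .
qed

lemma w_le_powr_above_threshold:
  assumes "n \<ge> 1" and "\<xi> \<ge> real n powr d" and "d > 0"
    and C: "\<And>\<xi>. \<xi> \<ge> \<xi>0 \<Longrightarrow> \<bar>w 0 \<xi>\<bar> \<le> C * \<xi> powr - m" and "C \<ge> 0" and "m \<ge> 0"
    and "\<xi> \<ge> \<xi>0"
  shows "w n \<xi> \<le> C * real n powr - (m * d)"
proof -
  have "w n \<xi> \<le> C * \<xi> powr - m"
    using w_le_w0 C \<open>\<xi> \<ge> \<xi>0\<close> by (meson abs_ge_self order_trans)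
  also have "\<dots> \<le> C * (real n powr d) powr - m"
    using assms by (intro mult_left_mono powr_mono2') auto
  finally show ?thesis by (simp add: powr_powr mult.commute)
qed

lemma eventually_uniform_powr_bound:
  assumes "l \<ge> 1"
  shows "\<exists>C. eventually (\<lambda>n. \<forall>\<xi>\<ge>\<xi>0. w n \<xi> \<le> C * real n powr - real l) sequentially"
proof -
  define d where "d = 1 / (2 * \<beta>)"
  define m :: nat where "m = nat \<lceil>2 * \<beta> * real l\<rceil>"
  have "2 * \<beta> * real l > 0" using assms \<beta>_pos by simp
  then have "m \<ge> 1" unfolding m_def by (simp add: le_nat_iff)
  have "real m * d \<ge> real l"
    using \<beta>_pos unfolding m_def d_def by (simp add: field_simps)
  obtain C0 where C0: "\<And>\<xi>. \<xi> \<ge> \<xi>0 \<Longrightarrow> \<bar>w 0 \<xi>\<bar> \<le> C0 * \<xi> powr - real m"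
    using w0_decay \<open>m \<ge> 1\<close> unfolding decays_rapidly_on_def by (metis atLeast_iff)
  define C where "C = max C0 1"
  have "C0 \<le> C" "C \<ge> 1" unfolding C_def by auto
  have C_bound: "\<And>\<xi>. \<xi> \<ge> \<xi>0 \<Longrightarrow> \<bar>w 0 \<xi>\<bar> \<le> C * \<xi> powr - real m"
    using C0 \<open>C0 \<le> C\<close> by (meson mult_right_mono order_trans powr_ge_zero)
  have "eventually (\<lambda>n. n \<ge> 1 \<and> exp (- A * real n powr (-1/2) *
          (real n / (B / (2 * \<beta>) * ln (real n) + 1) - 1)) \<le> real n powr - real l) sequentially"
    using eventually_exp_sqrt_log_le_powr[OF A_pos, of "B / (2 * \<beta>)"] B_pos \<beta>_pos
    by (auto intro: eventually_conj eventually_ge_at_top)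
  then have "eventually (\<lambda>n. \<forall>\<xi>\<ge>\<xi>0. w n \<xi> \<le> C * real n powr - real l) sequentially"
  proof (rule eventually_mono, intro allI impI)
    fix n \<xi> assume n: "n \<ge> 1 \<and> exp (- A * real n powr (-1/2) *
          (real n / (B / (2 * \<beta>) * ln (real n) + 1) - 1)) \<le> real n powr - real l"
      and "\<xi> \<ge> \<xi>0"
    show "w n \<xi> \<le> C * real n powr - real l"
    proof (cases "\<xi> < real n powr d")
      case True
      then have "w n \<xi> \<le> real n powr - real l"
        using n w_le_exp_below_threshold[of n \<xi>] \<open>\<xi> \<ge> \<xi>0\<close> unfolding d_def by linarith
      also have "\<dots> \<le> C * real n powr - real l"
        using mult_right_mono[OF \<open>C \<ge> 1\<close>, of "real n powr - real l"] by simp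
      finally show ?thesis .
    next
      case False
      have "d > 0" using \<beta>_pos unfolding d_def by simp
      then have "w n \<xi> \<le> C * real n powr - (real m * d)"
        using False n C_bound \<open>C \<ge> 1\<close> \<open>\<xi> \<ge> \<xi>0\<close>
        by (intro w_le_powr_above_threshold) auto
      also have "\<dots> \<le> C * real n powr - real l"
        using n \<open>real m * d \<ge> real l\<close> \<open>C \<ge> 1\<close> by (intro mult_left_mono powr_mono) auto
      finally show ?thesis .
    qed
  qed
  then show ?thesis by blast
qed

end

theorem proposition7p2:
  fixes A B \<beta> \<xi>0 :: real and w :: "nat \<Rightarrow> real \<Rightarrow> real"
  assumes "A > 0" and "B > 0" and "\<beta> > 0" and "\<xi>0 > 0"
    and range01: "\<And>n \<xi>. \<xi> \<ge> \<xi>0 \<Longrightarrow> 0 \<le> w n \<xi> \<and> w n \<xi> \<le> 1"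
    and mono: "\<And>n \<xi>. \<xi> \<ge> \<xi>0 \<Longrightarrow> w (Suc n) \<xi> \<le> w n \<xi>"
    and decay0: "decays_rapidly_on {\<xi>0..} (w 0)"
    and contr: "\<And>n \<xi> (N::nat). \<xi> \<ge> \<xi>0 \<Longrightarrow> real N > B * ln \<xi> \<Longrightarrow>
                  w (n + N) \<xi> \<le> (1 - A * \<xi> powr (- \<beta>)) * w n \<xi>"
  shows "seq_decays_rapidly (\<lambda>n. Sup (w n ` {\<xi>0..}))"
proof -
  interpret contracting_family A B \<beta> \<xi>0 w
    using assms by unfold_locales
  show ?thesis
  proof (rule seq_decays_rapidlyI_eventually)
    fix n
    show "\<bar>Sup (w n ` {\<xi>0..})\<bar> \<le> 1"
      using range01 by (intro abs_Sup_image_le) auto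
  next
    fix l :: nat assume "l \<ge> 1"
    then obtain C where "eventually (\<lambda>n. \<forall>\<xi>\<ge>\<xi>0. w n \<xi> \<le> C * real n powr - real l) sequentially"
      using eventually_uniform_powr_bound by blast
    then have "eventually (\<lambda>n. \<bar>Sup (w n ` {\<xi>0..})\<bar> \<le> C * real n powr - real l) sequentially"
      by (rule eventually_mono) (use range01 in \<open>auto intro: abs_Sup_image_le\<close>)
    then show "\<exists>C. eventually (\<lambda>n. \<bar>Sup (w n ` {\<xi>0..})\<bar> \<le> C * real n powr - real l) sequentially"
      by blast
  qed
qed

end
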